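(* Let $L_1,L_2\in\mathcal L_n$. Then $L_1\preceq_B L_2$ if and only if $H(L_1)-H(L_2)$ is a (possibly empty) sum of contiguous positive T-blocks. Moreover, if $L_1$ is obtained from $L_2$ by a single contiguous decreasing intercalate switch of consecutive integers, i.e. there are $i,j\in[n-1]$ and $a\in[n-1]$ with $(L_2)_{i,j}=(L_2)_{i+1,j+1}=a+1$, $(L_2)_{i,j+1}=(L_2)_{i+1,j}=a$, while $(L_1)_{i,j}=(L_1)_{i+1,j+1}=a$, $(L_1)_{i,j+1}=(L_1)_{i+1,j}=a+1$ and $L_1,L_2$ agree in all other cells, then $L_2$ covers $L_1$ in $(\mathcal L_n,\preceq_B)$.
   Context: Let $[n]=\{1,\dots,n\}$. A Latin square of order $n$ is an $n\times n$ array with entries in $[n]$ in which each symbol occurs exactly once in each row and each column; $\mathcal L_n$ is the set of them. A hypermatrix of order $n$ is an integer array $A=(A_{i,j,k})_{i,j,k\in[n]}$. For $L\in\mathcal L_n$, $H(L)$ is the hypermatrix with $H(L)_{i,j,k}=1$ if $L_{i,j}=k$ and $0$ otherwise. For $i_1<i_2$, $j_1<j_2$, $k_1<k_2$ in $[n]$, the positive T-block on $\{i_1,i_2\}\times\{j_1,j_2\}\times\{k_1,k_2\}$ is the hypermatrix that is zero outside these eight positions, with entries $+1$ at $(i_1,j_1,k_1),(i_2,j_2,k_1),(i_1,j_2,k_2),(i_2,j_1,k_2)$ and $-1$ at $(i_1,j_2,k_1),(i_2,j_1,k_1),(i_1,j_1,k_2),(i_2,j_2,k_2)$; it is contiguous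 if $i_2=i_1+1$, $j_2=j_1+1$, $k_2=k_1+1$. For hypermatrices $A,B$ of order $n$, $A\preceq_B B$ means $A-B$ is a (possibly empty) sum of positive T-blocks (the Bruhat order); for Latin squares, $L_1\preceq_B L_2$ means $H(L_1)\preceq_B H(L_2)$. An element $y$ covers $x$ if $x\prec y$ and no $z$ satisfies $x\prec z\prec y$. *)

theory Defs
  imports Main
begin

text \<open>Latin squares of order n are represented as functions L :: nat => nat => nat;
  only the values on [n] x [n] are relevant (cells are indexed by 1..n).\<close>

type_synonym lsquare = "nat \<Rightarrow> nat \<Rightarrow> nat"
type_synonym hypermatrix = "nat \<Rightarrow> nat \<Rightarrow> nat \<Rightarrow> int"

definition latin_square :: "nat \<Rightarrow> lsquare \<Rightarrow> bool" where
  "latin_square n L \<longleftrightarrow>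
     (\<forall>i\<in>{1..n}. \<forall>j\<in>{1..n}. L i j \<in> {1..n}) \<and>
     (\<forall>i\<in>{1..n}. inj_on (\<lambda>j. L i j) {1..n}) \<and>
     (\<forall>j\<in>{1..n}. inj_on (\<lambda>i. L i j) {1..n})"

definition H :: "nat \<Rightarrow> lsquare \<Rightarrow> hypermatrix" where
  "H n L = (\<lambda>i j k. if i \<in> {1..n} \<and> j \<in> {1..n} \<and> k \<in> {1..n} \<and> L i j = k then 1 else 0)"

definition tblock :: "nat \<Rightarrow> nat \<Rightarrow> nat \<Rightarrow> nat \<Rightarrow> nat \<Rightarrow> nat \<Rightarrow> hypermatrix" where
  "tblock i1 i2 j1 j2 k1 k2 = (\<lambda>i j k.
     if (i, j, k) \<in> {(i1,j1,k1), (i2,j2,k1), (i1,j2,k2), (i2,j1,k2)} then 1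
     else if (i, j, k) \<in> {(i1,j2,k1), (i2,j1,k1), (i1,j1,k2), (i2,j2,k2)} then -1
     else 0)"

type_synonym tindex = "nat \<times> nat \<times> nat \<times> nat \<times> nat \<times> nat"

definition valid_tblock :: "nat \<Rightarrow> tindex \<Rightarrow> bool" where
  "valid_tblock n t = (case t of (i1, i2, j1, j2, k1, k2) \<Rightarrow>
     1 \<le> i1 \<and> i1 < i2 \<and> i2 \<le> n \<and> 1 \<le> j1 \<and> j1 < j2 \<and> j2 \<le> n \<and>
     1 \<le> k1 \<and> k1 < k2 \<and> k2 \<le> n)"

definition contiguous :: "tindex \<Rightarrow> bool" where
  "contiguous t = (case t of (i1, i2, j1, j2, k1, k2) \<Rightarrow>
     i2 = i1 + 1 \<and> j2 = j1 + 1 \<and> k2 = k1 + 1)"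

definition tblock_of :: "tindex \<Rightarrow> hypermatrix" where
  "tblock_of t = (case t of (i1, i2, j1, j2, k1, k2) \<Rightarrow> tblock i1 i2 j1 j2 k1 k2)"

definition sum_of_tblocks :: "nat \<Rightarrow> (tindex \<Rightarrow> bool) \<Rightarrow> hypermatrix \<Rightarrow> bool" where
  "sum_of_tblocks n P D \<longleftrightarrow>
     (\<exists>ts. (\<forall>t\<in>set ts. valid_tblock n t \<and> P t) \<and>
           (\<forall>i j k. D i j k = (\<Sum>t\<leftarrow>ts. tblock_of t i j k)))"

definition bruhat_le :: "nat \<Rightarrow> hypermatrix \<Rightarrow> hypermatrix \<Rightarrow> bool" where
  "bruhat_le n A B \<longleftrightarrow> sum_of_tblocks n (\<lambda>_. True) (\<lambda>i j k. A i j k - B i j k)"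

definition ls_bruhat_le :: "nat \<Rightarrow> lsquare \<Rightarrow> lsquare \<Rightarrow> bool" where
  "ls_bruhat_le n L1 L2 \<longleftrightarrow> bruhat_le n (H n L1) (H n L2)"

definition ls_bruhat_less :: "nat \<Rightarrow> lsquare \<Rightarrow> lsquare \<Rightarrow> bool" where
  "ls_bruhat_less n L1 L2 \<longleftrightarrow> ls_bruhat_le n L1 L2 \<and> H n L1 \<noteq> H n L2"

definition ls_covers :: "nat \<Rightarrow> lsquare \<Rightarrow> lsquare \<Rightarrow> bool" where
  "ls_covers n L2 L1 \<longleftrightarrow> ls_bruhat_less n L1 L2 \<and>
     \<not> (\<exists>L. latin_square n L \<and> ls_bruhat_less n L1 L \<and> ls_bruhat_less n L L2)"

definition contig_decr_switch :: "nat \<Rightarrow> lsquare \<Rightarrow> lsquare \<Rightarrow> bool" where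
  "contig_decr_switch n L1 L2 \<longleftrightarrow>
     (\<exists>i\<in>{1..n-1}. \<exists>j\<in>{1..n-1}. \<exists>a\<in>{1..n-1}.
        L2 i j = a + 1 \<and> L2 (i+1) (j+1) = a + 1 \<and> L2 i (j+1) = a \<and> L2 (i+1) j = a \<and>
        L1 i j = a \<and> L1 (i+1) (j+1) = a \<and> L1 i (j+1) = a + 1 \<and> L1 (i+1) j = a + 1 \<and>
        (\<forall>p\<in>{1..n}. \<forall>q\<in>{1..n}. (p, q) \<notin> {i, i+1} \<times> {j, j+1} \<longrightarrow> L1 p q = L2 p q))"

end

theory Submission
  imports Defs
begin

text \<open>
  A positive T-block is the tensor product of the three vectors e_i1 - e_i2, e_j1 - e_j2 and
  e_k1 - e_k2. Telescoping each factor, e_x - e_z = (e_x - e_(x+1)) + ... + (e_(z-1) - e_z),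
  and expanding the product writes every T-block as a sum of contiguous T-blocks, which gives the
  first claim. For the second, the linear moment A \<mapsto> \<Sum> A_ijk i j k takes the value
  (i1 - i2)(j1 - j2)(k1 - k2) \<le> -1 on a T-block, and exactly -1 on a contiguous one. Hence
  every strict Bruhat step lowers it by at least 1, while a contiguous switch lowers it by exactly
  1, leaving no room for an intermediate square.
\<close>

lemma sum_product3:
  fixes f g h :: "_ \<Rightarrow> 'a::comm_semiring_1"
  shows "sum f A * sum g B * sum h C = (\<Sum>x\<in>A. \<Sum>y\<in>B. \<Sum>z\<in>C. f x * g y * h z)"
  by (subst sum_product, subst sum_distrib_right, subst sum_distrib_right) (simp add: sum_distrib_left)

lemma sum_of_tblocks_mono:
  assumes "sum_of_tblocks n P D" and "\<And>t. P t \<Longrightarrow> Q t"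
  shows "sum_of_tblocks n Q D"
  using assms unfolding sum_of_tblocks_def by blast

lemma sum_of_tblocks_zero: "sum_of_tblocks n P (\<lambda>i j k. 0)"
  unfolding sum_of_tblocks_def by (intro exI[of _ "[]"]) simp

lemma sum_of_tblocks_tblock_of:
  "valid_tblock n t \<Longrightarrow> P t \<Longrightarrow> sum_of_tblocks n P (tblock_of t)"
  unfolding sum_of_tblocks_def by (intro exI[of _ "[t]"]) simp

lemma sum_of_tblocks_add:
  assumes "sum_of_tblocks n P A" and "sum_of_tblocks n P B"
  shows "sum_of_tblocks n P (\<lambda>i j k. A i j k + B i j k)"
proof -
  obtain ts us where
    "\<forall>t\<in>set ts. valid_tblock n t \<and> P t" "\<forall>i j k. A i j k = (\<Sum>t\<leftarrow>ts. tblock_of t i j k)"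
    "\<forall>t\<in>set us. valid_tblock n t \<and> P t" "\<forall>i j k. B i j k = (\<Sum>t\<leftarrow>us. tblock_of t i j k)"
    using assms unfolding sum_of_tblocks_def by blast
  then show ?thesis
    unfolding sum_of_tblocks_def by (intro exI[of _ "ts @ us"]) auto
qed

lemma sum_of_tblocks_sum_list:
  assumes "\<forall>x\<in>set xs. sum_of_tblocks n P (f x)"
  shows "sum_of_tblocks n P (\<lambda>i j k. \<Sum>x\<leftarrow>xs. f x i j k)"
  using assms by (induction xs) (simp_all add: sum_of_tblocks_zero sum_of_tblocks_add)

lemma sum_of_tblocks_sum:
  assumes "finite S" and "\<forall>x\<in>S. sum_of_tblocks n P (f x)"
  shows "sum_of_tblocks n P (\<lambda>i j k. \<Sum>x\<in>S. f x i j k)"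
  using assms by (induction S rule: finite_induct) (simp_all add: sum_of_tblocks_zero sum_of_tblocks_add)

definition unit_diff :: "nat \<Rightarrow> nat \<Rightarrow> nat \<Rightarrow> int" where
  "unit_diff x y i = of_bool (i = x) - of_bool (i = y)"

lemma unit_diff_eq: "x \<noteq> y \<Longrightarrow> unit_diff x y i = (if i = x then 1 else if i = y then -1 else 0)"
  by (simp add: unit_diff_def)

lemma tblock_eq_unit_diff_product:
  assumes "x1 \<noteq> x2" and "y1 \<noteq> y2" and "z1 \<noteq> z2"
  shows "tblock x1 x2 y1 y2 z1 z2 i j k = unit_diff x1 x2 i * unit_diff y1 y2 j * unit_diff z1 z2 k"
  unfolding tblock_def unit_diff_eq[OF assms(1)] unit_diff_eq[OF assms(2)] unit_diff_eq[OF assms(3)]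
  using assms by auto

lemma unit_diff_telescope:
  assumes "x \<le> y"
  shows "unit_diff x y i = (\<Sum>p = x..<y. unit_diff p (Suc p) i)"
  using sum_Suc_diff'[OF assms, of "\<lambda>p. - of_bool (i = p) :: int"]
  by (simp add: unit_diff_def)

lemma tblock_eq_sum_contiguous:
  assumes "x1 < x2" and "y1 < y2" and "z1 < z2"
  shows "tblock x1 x2 y1 y2 z1 z2 = (\<lambda>i j k.
    \<Sum>p = x1..<x2. \<Sum>q = y1..<y2. \<Sum>r = z1..<z2. tblock p (Suc p) q (Suc q) r (Suc r) i j k)"
proof (intro ext)
  fix i j k
  have "tblock x1 x2 y1 y2 z1 z2 i j k = unit_diff x1 x2 i * unit_diff y1 y2 j * unit_diff z1 z2 k"
    using assms by (intro tblock_eq_unit_diff_product) simp_all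
  also have "\<dots> = (\<Sum>p = x1..<x2. unit_diff p (Suc p) i) * (\<Sum>q = y1..<y2. unit_diff q (Suc q) j)
      * (\<Sum>r = z1..<z2. unit_diff r (Suc r) k)"
    using assms by (simp add: unit_diff_telescope[of x1 x2] unit_diff_telescope[of y1 y2]
        unit_diff_telescope[of z1 z2])
  also have "\<dots> = (\<Sum>p = x1..<x2. \<Sum>q = y1..<y2. \<Sum>r = z1..<z2. tblock p (Suc p) q (Suc q) r (Suc r) i j k)"
    by (simp add: sum_product3 tblock_eq_unit_diff_product)
  finally show "tblock x1 x2 y1 y2 z1 z2 i j k = \<dots>" .
qed

lemma sum_of_tblocks_contiguous_tblock_of:
  assumes "valid_tblock n t"
  shows "sum_of_tblocks n contiguous (tblock_of t)"
proof -
  obtain x1 x2 y1 y2 z1 z2 where t: "t = (x1, x2, y1, y2, z1, z2)"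
    by (cases t) blast
  have "sum_of_tblocks n contiguous (\<lambda>i j k.
    \<Sum>p = x1..<x2. \<Sum>q = y1..<y2. \<Sum>r = z1..<z2. tblock_of (p, Suc p, q, Suc q, r, Suc r) i j k)"
    using assms unfolding t
    by (intro sum_of_tblocks_sum ballI sum_of_tblocks_tblock_of finite_atLeastLessThan)
      (auto simp: valid_tblock_def contiguous_def)
  moreover have "tblock_of t = (\<lambda>i j k.
    \<Sum>p = x1..<x2. \<Sum>q = y1..<y2. \<Sum>r = z1..<z2. tblock_of (p, Suc p, q, Suc q, r, Suc r) i j k)"
    using assms unfolding t tblock_of_def prod.case valid_tblock_def
    by (intro tblock_eq_sum_contiguous) simp_all
  ultimately show ?thesis
    by (simp only:)
qed

lemma bruhat_le_iff_sum_of_contiguous_tblocks: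
  "bruhat_le n A B \<longleftrightarrow> sum_of_tblocks n contiguous (\<lambda>i j k. A i j k - B i j k)"
proof
  assume "bruhat_le n A B"
  then obtain ts where ts: "\<forall>t\<in>set ts. valid_tblock n t"
    and diff: "(\<lambda>i j k. A i j k - B i j k) = (\<lambda>i j k. \<Sum>t\<leftarrow>ts. tblock_of t i j k)"
    unfolding bruhat_le_def sum_of_tblocks_def by auto
  show "sum_of_tblocks n contiguous (\<lambda>i j k. A i j k - B i j k)"
    unfolding diff using ts by (intro sum_of_tblocks_sum_list ballI sum_of_tblocks_contiguous_tblock_of) blast
next
  assume "sum_of_tblocks n contiguous (\<lambda>i j k. A i j k - B i j k)"
  then show "bruhat_le n A B"
    unfolding bruhat_le_def by (rule sum_of_tblocks_mono) simp
qed

definition moment :: "nat \<Rightarrow> hypermatrix \<Rightarrow> int" where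
  "moment n A = (\<Sum>i = 1..n. \<Sum>j = 1..n. \<Sum>k = 1..n. A i j k * int (i * j * k))"

lemma moment_add: "moment n (\<lambda>i j k. A i j k + B i j k) = moment n A + moment n B"
  by (simp add: moment_def distrib_right sum.distrib)

lemma moment_sum_list: "moment n (\<lambda>i j k. \<Sum>x\<leftarrow>xs. f x i j k) = (\<Sum>x\<leftarrow>xs. moment n (f x))"
proof (induction xs)
  case Nil
  then show ?case by (simp add: moment_def)
next
  case (Cons x xs)
  then show ?case by (simp add: moment_add)
qed

lemma moment_product:
  "moment n (\<lambda>i j k. u i * v j * w k) =
    (\<Sum>i = 1..n. u i * int i) * (\<Sum>j = 1..n. v j * int j) * (\<Sum>k = 1..n. w k * int k)"
  unfolding moment_def sum_product3 by (simp add: algebra_simps)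

lemma sum_unit_diff_weighted:
  assumes "x \<in> {1..n}" and "y \<in> {1..n}"
  shows "(\<Sum>i = 1..n. unit_diff x y i * int i) = int x - int y"
proof -
  have "(\<Sum>i = 1..n. unit_diff x y i * int i) =
      (\<Sum>i = 1..n. (if i = x then int x else 0) - (if i = y then int y else 0))"
    by (intro sum.cong) (auto simp: unit_diff_def)
  then show ?thesis
    using assms by (simp add: sum_subtractf)
qed

lemma moment_tblock:
  assumes "valid_tblock n (x1, x2, y1, y2, z1, z2)"
  shows "moment n (tblock x1 x2 y1 y2 z1 z2) = (int x1 - int x2) * (int y1 - int y2) * (int z1 - int z2)"
proof -
  have "tblock x1 x2 y1 y2 z1 z2 = (\<lambda>i j k. unit_diff x1 x2 i * unit_diff y1 y2 j * unit_diff z1 z2 k)"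
    using assms by (intro ext tblock_eq_unit_diff_product) (simp_all add: valid_tblock_def)
  moreover have "x1 \<in> {1..n}" "x2 \<in> {1..n}" "y1 \<in> {1..n}" "y2 \<in> {1..n}" "z1 \<in> {1..n}" "z2 \<in> {1..n}"
    using assms by (auto simp: valid_tblock_def)
  ultimately show ?thesis
    by (simp only: moment_product sum_unit_diff_weighted)
qed

lemma moment_tblock_of_le_minus_one:
  assumes "valid_tblock n t"
  shows "moment n (tblock_of t) \<le> -1"
proof -
  obtain x1 x2 y1 y2 z1 z2 where t: "t = (x1, x2, y1, y2, z1, z2)"
    by (cases t) blast
  have "int x1 - int x2 < 0" "int y1 - int y2 < 0" "int z1 - int z2 < 0"
    using assms by (simp_all add: t valid_tblock_def)
  then have "(int x1 - int x2) * (int y1 - int y2) * (int z1 - int z2) < 0"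
    by (intro mult_pos_neg mult_neg_neg)
  then show ?thesis
    using assms by (simp add: t tblock_of_def moment_tblock)
qed

lemma moment_contiguous_tblock_of:
  assumes "valid_tblock n t" and "contiguous t"
  shows "moment n (tblock_of t) = -1"
  using assms by (cases t) (simp add: tblock_of_def contiguous_def moment_tblock)

lemma moment_le_minus_one_if_bruhat_less:
  assumes "bruhat_le n A B" and "A \<noteq> B"
  shows "moment n (\<lambda>i j k. A i j k - B i j k) \<le> -1"
proof -
  obtain ts where ts: "\<forall>t\<in>set ts. valid_tblock n t"
    and diff: "(\<lambda>i j k. A i j k - B i j k) = (\<lambda>i j k. \<Sum>t\<leftarrow>ts. tblock_of t i j k)"
    using assms(1) unfolding bruhat_le_def sum_of_tblocks_def by auto
  have "ts \<noteq> []"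
    using assms(2) diff by (auto simp: fun_eq_iff)
  have "moment n (\<lambda>i j k. A i j k - B i j k) = (\<Sum>t\<leftarrow>ts. moment n (tblock_of t))"
    unfolding diff by (rule moment_sum_list)
  also have "\<dots> \<le> (\<Sum>t\<leftarrow>ts. -1)"
    using ts by (intro sum_list_mono moment_tblock_of_le_minus_one) blast
  also have "\<dots> = - int (length ts)"
    by (simp add: sum_list_triv)
  also have "\<dots> \<le> -1"
    using \<open>ts \<noteq> []\<close> by (simp add: Suc_le_eq)
  finally show ?thesis .
qed

lemma contiguous_tblock_bruhat_interval_trivial:
  assumes "valid_tblock n t" and "contiguous t"
    and "(\<lambda>i j k. A i j k - B i j k) = tblock_of t"
    and "bruhat_le n A C" and "bruhat_le n C B"
  shows "C = A \<or> C = B"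
proof (rule ccontr)
  assume "\<not> (C = A \<or> C = B)"
  then have "moment n (\<lambda>i j k. A i j k - C i j k) \<le> -1" "moment n (\<lambda>i j k. C i j k - B i j k) \<le> -1"
    using assms(4,5) by (auto intro: moment_le_minus_one_if_bruhat_less)
  moreover have "moment n (\<lambda>i j k. A i j k - B i j k) =
      moment n (\<lambda>i j k. A i j k - C i j k) + moment n (\<lambda>i j k. C i j k - B i j k)"
    by (simp flip: moment_add)
  moreover have "moment n (\<lambda>i j k. A i j k - B i j k) = -1"
    using assms(1-3) by (simp add: moment_contiguous_tblock_of)
  ultimately show False by linarith
qed

lemma bruhat_le_tblock_of:
  assumes "valid_tblock n t" and "(\<lambda>i j k. A i j k - B i j k) = tblock_of t"
  shows "bruhat_le n A B"
  unfolding bruhat_le_def assms(2) using assms(1) by (rule sum_of_tblocks_tblock_of) simp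

lemma tblock_of_nonzero:
  assumes "valid_tblock n t"
  shows "tblock_of t \<noteq> (\<lambda>i j k. 0)"
proof
  assume "tblock_of t = (\<lambda>i j k. 0)"
  moreover obtain x1 x2 y1 y2 z1 z2 where "t = (x1, x2, y1, y2, z1, z2)"
    by (cases t) blast
  ultimately have "tblock x1 x2 y1 y2 z1 z2 x1 y1 z1 = 0"
    by (simp add: tblock_of_def)
  then show False
    by (simp add: tblock_def)
qed

lemma H_diff_contig_decr_switch:
  assumes "contig_decr_switch n L1 L2"
  obtains t where "valid_tblock n t" and "contiguous t"
    and "(\<lambda>i j k. H n L1 i j k - H n L2 i j k) = tblock_of t"
proof -
  obtain i j a where ija: "i \<in> {1..n-1}" "j \<in> {1..n-1}" "a \<in> {1..n-1}"
    and L2: "L2 i j = a + 1" "L2 (i+1) (j+1) = a + 1" "L2 i (j+1) = a" "L2 (i+1) j = a"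
    and L1: "L1 i j = a" "L1 (i+1) (j+1) = a" "L1 i (j+1) = a + 1" "L1 (i+1) j = a + 1"
    and outside: "\<forall>p\<in>{1..n}. \<forall>q\<in>{1..n}. (p, q) \<notin> {i, i+1} \<times> {j, j+1} \<longrightarrow> L1 p q = L2 p q"
    using assms unfolding contig_decr_switch_def by blast
  let ?t = "(i, i + 1, j, j + 1, a, a + 1)"
  have "H n L1 p q k - H n L2 p q k = tblock i (i+1) j (j+1) a (a+1) p q k" for p q k
  proof (cases "(p, q) \<in> {i, i+1} \<times> {j, j+1}")
    case True
    have bounds: "i + 1 \<le> n" "j + 1 \<le> n" "a + 1 \<le> n"
      using ija by auto
    from True consider "p = i" "q = j" | "p = i" "q = j + 1" | "p = i + 1" "q = j" | "p = i + 1" "q = j + 1"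
      by blast
    then show ?thesis
      using ija bounds by cases (auto simp: H_def tblock_def L1[simplified] L2[simplified])
  next
    case False
    then have "H n L1 p q k = H n L2 p q k"
      using outside by (auto simp: H_def)
    with False show ?thesis
      by (auto simp: tblock_def)
  qed
  then have "(\<lambda>i j k. H n L1 i j k - H n L2 i j k) = tblock_of ?t"
    by (simp add: tblock_of_def fun_eq_iff)
  moreover have "valid_tblock n ?t" "contiguous ?t"
    using ija by (auto simp: valid_tblock_def contiguous_def)
  ultimately show ?thesis
    using that by blast
qed

theorem mainTheorem2:
  fixes n :: nat and L1 L2 :: lsquare
  assumes "latin_square n L1" and "latin_square n L2"
  shows "(ls_bruhat_le n L1 L2 \<longleftrightarrow>
            sum_of_tblocks n contiguous (\<lambda>i j k. H n L1 i j k - H n L2 i j k))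
         \<and> (contig_decr_switch n L1 L2 \<longrightarrow> ls_covers n L2 L1)"
proof (intro conjI impI)
  show "ls_bruhat_le n L1 L2 \<longleftrightarrow>
      sum_of_tblocks n contiguous (\<lambda>i j k. H n L1 i j k - H n L2 i j k)"
    unfolding ls_bruhat_le_def by (rule bruhat_le_iff_sum_of_contiguous_tblocks)
next
  assume "contig_decr_switch n L1 L2"
  then obtain t where t: "valid_tblock n t" "contiguous t"
    and diff: "(\<lambda>i j k. H n L1 i j k - H n L2 i j k) = tblock_of t"
    by (rule H_diff_contig_decr_switch)
  have le: "bruhat_le n (H n L1) (H n L2)"
    using t(1) diff by (rule bruhat_le_tblock_of)
  have ne: "H n L1 \<noteq> H n L2"
    using diff tblock_of_nonzero[OF t(1)] by auto
  have "H n L = H n L1 \<or> H n L = H n L2"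
    if "bruhat_le n (H n L1) (H n L)" and "bruhat_le n (H n L) (H n L2)" for L
    using t diff that by (rule contiguous_tblock_bruhat_interval_trivial)
  then show "ls_covers n L2 L1"
    using le ne unfolding ls_covers_def ls_bruhat_less_def ls_bruhat_le_def by metis
qed

end
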